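(* Let $A=(a_{i,j})$ be a symmetric $n\times n$ matrix with nonnegative entries (the weighted adjacency matrix of an undirected graph, self-loops allowed) with $\deg(i)=\sum_{j=1}^n a_{i,j}>0$ for all $i$. For each $i$ let $h_i:[0,1]\to[0,1]$ be a bijective, monotonically increasing function, and define $F:[0,1]^n\to[0,1]^n$ by $F_i(\beta)=h_i(\mu_i)$ with $\mu_i=\frac{1}{\deg(i)}\sum_{j=1}^n a_{i,j}\beta_j$. Then there exists a differentiable function $V:[0,1]^n\to\mathbb{R}$ with $V\ge 0$ such that for all $\beta\in[0,1]^n$, $$\langle F(\beta)-\beta,\nabla V(\beta)\rangle\le 0,$$ with equality if and only if $F(\beta)=\beta$.
   Context: In the paper $h_i=h(\cdot,\gamma_i)$ for a family of functions indexed by parameters $\gamma_i$. *)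

theory Defs
  imports "HOL-Analysis.Analysis"
begin

definition unit_cube :: "(real ^ 'n) set" where
  "unit_cube = {\<beta>. \<forall>i. 0 \<le> \<beta> $ i \<and> \<beta> $ i \<le> 1}"

definition wdeg :: "real ^ 'n ^ 'n \<Rightarrow> 'n \<Rightarrow> real" where
  "wdeg A i = (\<Sum>j\<in>UNIV. A $ i $ j)"

definition dynF :: "real ^ 'n ^ 'n \<Rightarrow> ('n \<Rightarrow> real \<Rightarrow> real) \<Rightarrow> real ^ 'n \<Rightarrow> real ^ 'n" where
  "dynF A h \<beta> = (\<chi> i. h i ((\<Sum>j\<in>UNIV. A $ i $ j * \<beta> $ j) / wdeg A i))"

end

theory Submission
  imports Defs
begin

text \<open>
  Let \<open>g\<^sub>i\<close> be the inverse of \<open>h\<^sub>i\<close> and \<open>G\<^sub>i\<close> its antiderivative with \<open>G\<^sub>i(0) = 0\<close>.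
  The potential \<open>V(\<beta>) = \<Sum>\<^sub>i deg(i) G\<^sub>i(\<beta>\<^sub>i) - \<beta>\<^sup>TA\<beta>/2 + \<Sum>\<^sub>i deg(i)/2\<close>
  has, by symmetry of \<open>A\<close>, the gradient \<open>deg(i) (g\<^sub>i(\<beta>\<^sub>i) - \<mu>\<^sub>i)\<close>. Since
  \<open>\<mu>\<^sub>i = g\<^sub>i(F\<^sub>i(\<beta>))\<close>, the \<open>i\<close>-th summand of \<open>\<langle>F(\<beta>) - \<beta>, \<nabla>V(\<beta>)\<rangle>\<close> is
  \<open>-deg(i) (F\<^sub>i(\<beta>) - \<beta>\<^sub>i) (g\<^sub>i(F\<^sub>i(\<beta>)) - g\<^sub>i(\<beta>\<^sub>i))\<close>, which is nonpositive and vanishes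
  only if \<open>F\<^sub>i(\<beta>) = \<beta>\<^sub>i\<close>, because \<open>g\<^sub>i\<close> is strictly increasing. The constant term makes
  \<open>V\<close> nonnegative, as \<open>\<beta>\<^sup>TA\<beta> \<le> \<Sum>\<^sub>i\<^sub>,\<^sub>j a\<^sub>i\<^sub>j\<close> on the cube.
\<close>

lemma strict_mono_on_inv_into:
  fixes f :: "'a::linorder \<Rightarrow> 'b::linorder"
  assumes bij: "bij_betw f A B" and mono: "mono_on A f"
  shows "strict_mono_on B (inv_into A f)"
proof (rule strict_mono_onI)
  fix x y assume "x \<in> B" "y \<in> B" "x < y"
  then have "inv_into A f x \<in> A" "inv_into A f y \<in> A"
    "f (inv_into A f x) = x" "f (inv_into A f y) = y"
    using bij bij_betw_inv_into[OF bij] by (auto simp: bij_betw_inv_into_right dest: bij_betwE)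
  then show "inv_into A f x < inv_into A f y"
    using \<open>x < y\<close> mono by (metis leD leI mono_onD)
qed

lemma continuous_on_mono_onto_Icc:
  fixes f :: "real \<Rightarrow> real"
  assumes mono: "mono_on {a..b} f" and onto: "f ` {a..b} = {c..d}"
  shows "continuous_on {a..b} f"
proof (cases "a \<le> b")
  case True
  \<comment> \<open>extended by translations, \<open>f\<close> becomes a monotone surjection of \<open>\<real>\<close>\<close>
  define f' where "f' x = (if x < a then x - a + c else if b < x then x - b + d else f x)" for x
  have f_in: "f x \<in> {c..d}" if "x \<in> {a..b}" for x
    using onto that by blast
  have "c \<le> d"
    using f_in[of a] True by simp
  have "continuous_on UNIV f'"
  proof (rule continuous_onI_mono)
    have "y \<in> range f'" for y
    proof -
      consider "y < c" | "d < y" | "y \<in> {c..d}" by force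
      then show ?thesis
      proof cases
        case 1
        then have "f' (y - c + a) = y" by (simp add: f'_def)
        then show ?thesis by (metis rangeI)
      next
        case 2
        then have "f' (y - d + b) = y" using True by (simp add: f'_def)
        then show ?thesis by (metis rangeI)
      next
        case 3
        then obtain x where "x \<in> {a..b}" "f x = y" using onto by (metis imageE)
        then have "f' x = y" by (simp add: f'_def)
        then show ?thesis by (metis rangeI)
      qed
    qed
    then have "range f' = UNIV" by blast
    then show "open (range f')" by simp
    show "f' x \<le> f' y" if "x \<le> y" for x y
      using that True \<open>c \<le> d\<close> f_in[of x] f_in[of y] mono_onD[OF mono, of x y]
      by (auto simp: f'_def)
  qed
  then show ?thesis
    by (rule continuous_on_cong[THEN iffD1, rotated 2, OF continuous_on_subset]) (auto simp: f'_def)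
qed simp

lemma continuous_on_inv_into_mono_bij_Icc:
  fixes h :: "real \<Rightarrow> real"
  assumes bij: "bij_betw h {a..b} {c..d}" and mono: "mono_on {a..b} h"
  shows "continuous_on {c..d} (inv_into {a..b} h)"
proof (rule continuous_on_mono_onto_Icc)
  show "mono_on {c..d} (inv_into {a..b} h)"
    using strict_mono_on_inv_into[OF bij mono] by (rule strict_mono_on_imp_mono_on)
  show "inv_into {a..b} h ` {c..d} = {a..b}"
    using bij_betw_inv_into[OF bij] by (simp add: bij_betw_def)
qed

lemma strict_mono_on_diff_mult_pos:
  fixes g :: "'a::linordered_idom \<Rightarrow> 'a"
  assumes "strict_mono_on S g" and "x \<in> S" "y \<in> S" "x \<noteq> y"
  shows "0 < (x - y) * (g x - g y)"
proof (cases "x < y")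
  case True
  then have "g x < g y" using assms by (simp add: strict_mono_onD)
  then show ?thesis using True by (simp add: mult_neg_neg)
next
  case False
  then have "y < x" using \<open>x \<noteq> y\<close> by simp
  then have "g y < g x" using assms by (simp add: strict_mono_onD)
  then show ?thesis using \<open>y < x\<close> by simp
qed

lemma has_derivative_vec_nth_comp:
  fixes G :: "real \<Rightarrow> real"
  assumes "(G has_real_derivative D) (at (x $ i) within T)" and "(\<lambda>y. y $ i) ` S \<subseteq> T"
  shows "((\<lambda>y. G (y $ i)) has_derivative (\<lambda>v. D * v $ i)) (at x within S)"
proof -
  have "(G has_derivative (*) D) (at (x $ i) within (\<lambda>y. y $ i) ` S)"
    using has_derivative_subset assms unfolding has_field_derivative_def by blast
  then show ?thesis
    using diff_chain_within[OF bounded_linear_imp_has_derivative[OF bounded_linear_vec_nth]]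
    by (simp add: o_def)
qed

lemma has_derivative_quadratic_form:
  fixes A :: "real ^ 'n ^ 'n"
  assumes "transpose A = A"
  shows "((\<lambda>x. x \<bullet> (A *v x)) has_derivative (\<lambda>v. 2 * ((A *v x) \<bullet> v))) (at x within S)"
proof -
  have sym: "x \<bullet> (A *v v) = (A *v x) \<bullet> v" for v
    by (metis assms dot_lmul_matrix vector_transpose_matrix)
  have "((\<lambda>x. x \<bullet> (A *v x)) has_derivative (\<lambda>v. x \<bullet> (A *v v) + v \<bullet> (A *v x))) (at x within S)"
    by (intro has_derivative_inner has_derivative_ident bounded_linear_imp_has_derivative
        matrix_vector_mul_bounded_linear)
  then show ?thesis
    by (rule has_derivative_eq_rhs) (simp add: sym inner_commute)
qed

definition potential :: "real ^ 'n ^ 'n \<Rightarrow> ('n \<Rightarrow> real \<Rightarrow> real) \<Rightarrow> real ^ 'n \<Rightarrow> real" where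
  "potential A h \<beta> =
     (\<Sum>i\<in>UNIV. wdeg A i * integral {0..\<beta> $ i} (inv_into {0..1} (h i)))
     - \<beta> \<bullet> (A *v \<beta>) / 2 + (\<Sum>i\<in>UNIV. wdeg A i) / 2"

definition potential_grad :: "real ^ 'n ^ 'n \<Rightarrow> ('n \<Rightarrow> real \<Rightarrow> real) \<Rightarrow> real ^ 'n \<Rightarrow> real ^ 'n" where
  "potential_grad A h \<beta> = (\<chi> i. wdeg A i * inv_into {0..1} (h i) (\<beta> $ i)) - A *v \<beta>"

lemma has_derivative_potential:
  assumes "transpose A = A" and cont: "\<And>i. continuous_on {0..1} (inv_into {0..1} (h i))"
    and "\<beta> \<in> unit_cube"
  shows "(potential A h has_derivative (\<lambda>v. potential_grad A h \<beta> \<bullet> v)) (at \<beta> within unit_cube)"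
proof -
  have "((\<lambda>\<beta>. integral {0..\<beta> $ i} (inv_into {0..1} (h i))) has_derivative
      (\<lambda>v. inv_into {0..1} (h i) (\<beta> $ i) * v $ i)) (at \<beta> within unit_cube)" for i
    using \<open>\<beta> \<in> unit_cube\<close>
    by (intro has_derivative_vec_nth_comp[OF integral_has_real_derivative[OF cont]])
      (auto simp: unit_cube_def)
  then have "(potential A h has_derivative
      (\<lambda>v. (\<Sum>i\<in>UNIV. wdeg A i * (inv_into {0..1} (h i) (\<beta> $ i) * v $ i))
         - 2 * ((A *v \<beta>) \<bullet> v) / 2 + 0)) (at \<beta> within unit_cube)"
    unfolding potential_def[abs_def]
    by (intro derivative_intros assms(1) has_derivative_quadratic_form
        bounded_linear.has_derivative[OF bounded_linear_divide])
  then show ?thesis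
    by (rule has_derivative_eq_rhs)
      (auto simp: potential_grad_def inner_diff_left inner_vec_def algebra_simps sum_subtractf)
qed

lemma matrix_vector_mult_unit_cube_bounds:
  assumes "\<And>i j. 0 \<le> A $ i $ j" and "\<beta> \<in> unit_cube"
  shows "0 \<le> (A *v \<beta>) $ i" and "(A *v \<beta>) $ i \<le> wdeg A i"
  using assms
  by (auto simp: matrix_vector_mult_def wdeg_def unit_cube_def intro!: sum_nonneg sum_mono mult_left_le)

lemma potential_nonneg:
  assumes nonneg: "\<And>i j. 0 \<le> A $ i $ j"
    and bij: "\<And>i. bij_betw (h i) {0..1} {0..1}" and mono: "\<And>i. mono_on {0..1} (h i)"
    and \<beta>: "\<beta> \<in> unit_cube"
  shows "0 \<le> potential A h \<beta>"
proof -
  have \<beta>_in: "\<beta> $ i \<in> {0..1}" for i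
    using \<beta> by (simp add: unit_cube_def)
  have "0 \<le> integral {0..\<beta> $ i} (inv_into {0..1} (h i))" for i
  proof (rule integral_nonneg)
    show "inv_into {0..1} (h i) integrable_on {0..\<beta> $ i}"
      using \<beta>_in[of i]
      by (intro integrable_continuous_real
          continuous_on_subset[OF continuous_on_inv_into_mono_bij_Icc[OF bij mono]]) auto
    show "0 \<le> inv_into {0..1} (h i) x" if "x \<in> {0..\<beta> $ i}" for x
      using that \<beta>_in[of i] bij_betwE[OF bij_betw_inv_into[OF bij]] by fastforce
  qed
  moreover have "0 \<le> wdeg A i" for i
    using nonneg by (simp add: wdeg_def sum_nonneg)
  ultimately have "0 \<le> (\<Sum>i\<in>UNIV. wdeg A i * integral {0..\<beta> $ i} (inv_into {0..1} (h i)))"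
    by (simp add: sum_nonneg)
  moreover have "\<beta> \<bullet> (A *v \<beta>) \<le> (\<Sum>i\<in>UNIV. wdeg A i)"
    unfolding inner_vec_def
  proof (rule sum_mono)
    fix i
    have "\<beta> $ i * (A *v \<beta>) $ i \<le> (A *v \<beta>) $ i"
      using \<beta>_in[of i] matrix_vector_mult_unit_cube_bounds(1)[OF nonneg \<beta>]
      by (simp add: mult_left_le_one_le)
    also have "\<dots> \<le> wdeg A i"
      by (rule matrix_vector_mult_unit_cube_bounds(2)[OF nonneg \<beta>])
    finally show "\<beta> $ i \<bullet> (A *v \<beta>) $ i \<le> wdeg A i" by simp
  qed
  ultimately show ?thesis
    by (simp add: potential_def)
qed

lemma inner_dynF_minus_potential_grad:
  assumes nonneg: "\<And>i j. 0 \<le> A $ i $ j" and deg_pos: "\<And>i. wdeg A i > 0"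
    and bij: "\<And>i. bij_betw (h i) {0..1} {0..1}" and mono: "\<And>i. mono_on {0..1} (h i)"
    and \<beta>: "\<beta> \<in> unit_cube"
  shows "(dynF A h \<beta> - \<beta>) \<bullet> potential_grad A h \<beta> \<le> 0"
    and "(dynF A h \<beta> - \<beta>) \<bullet> potential_grad A h \<beta> = 0 \<longleftrightarrow> dynF A h \<beta> = \<beta>"
proof -
  define g where "g i = inv_into {0..1} (h i)" for i
  define \<mu> where "\<mu> i = (A *v \<beta>) $ i / wdeg A i" for i
  define y where "y i = h i (\<mu> i)" for i
  define p where "p i = wdeg A i * ((y i - \<beta> $ i) * (g i (y i) - g i (\<beta> $ i)))" for i
  have \<beta>_in: "\<beta> $ i \<in> {0..1}" for i
    using \<beta> by (simp add: unit_cube_def)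
  have \<mu>_in: "\<mu> i \<in> {0..1}" for i
    using matrix_vector_mult_unit_cube_bounds[OF nonneg \<beta>, of i] deg_pos[of i]
    by (simp add: \<mu>_def)
  have y_in: "y i \<in> {0..1}" for i
    using bij_betw_apply[OF bij \<mu>_in] by (simp add: y_def)
  have g_y: "g i (y i) = \<mu> i" for i
    using bij_betw_inv_into_left[OF bij \<mu>_in] by (simp add: g_def y_def)
  have dynF_eq: "dynF A h \<beta> = (\<chi> i. y i)"
    by (simp add: dynF_def y_def \<mu>_def matrix_vector_mult_def)
  have A\<beta>: "(A *v \<beta>) $ i = wdeg A i * \<mu> i" for i
    using deg_pos[of i] by (simp add: \<mu>_def)
  have inner_eq: "(dynF A h \<beta> - \<beta>) \<bullet> potential_grad A h \<beta> = - (\<Sum>i\<in>UNIV. p i)"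
    by (simp add: dynF_eq potential_grad_def inner_vec_def p_def g_def A\<beta> g_y[unfolded g_def]
        sum_negf[symmetric] algebra_simps)
  have p_pos: "0 < p i" if "y i \<noteq> \<beta> $ i" for i
    using strict_mono_on_diff_mult_pos[OF strict_mono_on_inv_into[OF bij mono] y_in \<beta>_in that]
      deg_pos[of i]
    by (simp add: p_def g_def)
  have p_eq_0: "p i = 0 \<longleftrightarrow> y i = \<beta> $ i" for i
    using p_pos[of i] by (cases "y i = \<beta> $ i") (auto simp: p_def)
  have p_nonneg: "0 \<le> p i" for i
    using p_pos[of i] p_eq_0[of i] by fastforce
  show "(dynF A h \<beta> - \<beta>) \<bullet> potential_grad A h \<beta> \<le> 0"
    using p_nonneg by (simp add: inner_eq sum_nonneg)
  have "(\<Sum>i\<in>UNIV. p i) = 0 \<longleftrightarrow> (\<forall>i. y i = \<beta> $ i)"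
    using sum_nonneg_eq_0_iff[of UNIV p] p_nonneg p_eq_0 by simp
  then show "(dynF A h \<beta> - \<beta>) \<bullet> potential_grad A h \<beta> = 0 \<longleftrightarrow> dynF A h \<beta> = \<beta>"
    unfolding inner_eq by (simp add: dynF_eq vec_eq_iff)
qed

theorem theorem1:
  fixes A :: "real ^ 'n ^ 'n" and h :: "'n \<Rightarrow> real \<Rightarrow> real"
  assumes symm: "\<And>i j. A $ i $ j = A $ j $ i"
    and nonneg: "\<And>i j. 0 \<le> A $ i $ j"
    and deg_pos: "\<And>i. wdeg A i > 0"
    and h_bij: "\<And>i. bij_betw (h i) {0..1} {0..1}"
    and h_mono: "\<And>i. mono_on {0..1} (h i)"
  shows "\<exists>(V :: real ^ 'n \<Rightarrow> real) (gradV :: real ^ 'n \<Rightarrow> real ^ 'n).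
           (\<forall>\<beta>\<in>unit_cube. (V has_derivative (\<lambda>v. gradV \<beta> \<bullet> v)) (at \<beta> within unit_cube)) \<and>
           (\<forall>\<beta>\<in>unit_cube. 0 \<le> V \<beta>) \<and>
           (\<forall>\<beta>\<in>unit_cube. (dynF A h \<beta> - \<beta>) \<bullet> gradV \<beta> \<le> 0 \<and>
                ((dynF A h \<beta> - \<beta>) \<bullet> gradV \<beta> = 0 \<longleftrightarrow> dynF A h \<beta> = \<beta>))"
proof (intro exI conjI ballI)
  have "transpose A = A"
    using symm by (simp add: transpose_def vec_eq_iff)
  moreover have "continuous_on {0..1} (inv_into {0..1} (h i))" for i
    using h_bij h_mono by (rule continuous_on_inv_into_mono_bij_Icc)
  ultimately show
    "(potential A h has_derivative (\<lambda>v. potential_grad A h \<beta> \<bullet> v)) (at \<beta> within unit_cube)"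
    if "\<beta> \<in> unit_cube" for \<beta>
    using that by (rule has_derivative_potential)
  show "0 \<le> potential A h \<beta>" if "\<beta> \<in> unit_cube" for \<beta>
    using nonneg h_bij h_mono that by (rule potential_nonneg)
  fix \<beta> :: "real ^ 'n" assume "\<beta> \<in> unit_cube"
  then show "(dynF A h \<beta> - \<beta>) \<bullet> potential_grad A h \<beta> \<le> 0"
    and "(dynF A h \<beta> - \<beta>) \<bullet> potential_grad A h \<beta> = 0 \<longleftrightarrow> dynF A h \<beta> = \<beta>"
    using inner_dynF_minus_potential_grad[of A h \<beta>, OF nonneg deg_pos h_bij h_mono] by blast+
qed

end
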